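(* Let $s\in\{1,\ldots,d\}$, $M\in\mathbb{R}^{\mathcal{I}}$, $P\subset\mathcal{I}$, and let $G=G^-$ be a TT representation with $G_1,\ldots,G_{s-1}$ left orthogonal and $G_{s+1},\ldots,G_d$ right orthogonal. Let $S:=(M-A^{G^-})|_P$ and define the matrix block $N$ by $N(j):=(G^{<s})^T S_{(s)}(j)\,(G^{>s})^T$ for $j\in\mathcal{I}_s$. For $\alpha\in\mathbb{R}$ let $G^\alpha_s:=G^-_s+\alpha N$. Assume $\sum_{j\in\mathcal{I}_s}\|(G^{<s}N(j)G^{>s})|_{P,s,j}\|_F^2\neq 0$. Then the optimal overrelaxation parameter \[ \alpha^* := \mathrm{argmin}_{\alpha\in\mathbb{R}} \sum_{j\in\mathcal{I}_s}\big\|(G^{<s}\, G^{\alpha}_s(j)\, G^{>s} - M_{(s)}(j))|_{P,s,j}\big\|_F^2 \] is given by \[ \alpha^* = \frac{\sum_{j\in\mathcal{I}_s}\|N(j)\|_F^2}{\sum_{j\in\mathcal{I}_s}\|(G^{<s}N(j)G^{>s})|_{P,s,j}\|_F^2}. \]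
   Context: Let $\mathcal{I}_\mu=\{1,\ldots,n_\mu\}$, $\mathcal{I}=\mathcal{I}_1\times\cdots\times\mathcal{I}_d$. A TT representation with ranks $r_0=1,r_1,\ldots,r_{d-1},r_d=1$ consists of maps $G_\mu:\mathcal{I}_\mu\to\mathbb{R}^{r_{\mu-1}\times r_\mu}$; it represents $A^G_{i_1,\ldots,i_d}=G_1(i_1)\cdots G_d(i_d)$. $G_\mu$ is left orthogonal if $\sum_{i}G_\mu(i)^TG_\mu(i)=I$, right orthogonal if $\sum_i G_\mu(i)G_\mu(i)^T=I$. For $X\in\mathbb{R}^{\mathcal{I}}$, $X|_P$ is the tensor equal to $X$ on $P$ and $0$ elsewhere. $G^{<s}$ is the matrix with rows indexed by $(i_1,\ldots,i_{s-1})$, row $(i_1,\ldots,i_{s-1})$ being $G_1(i_1)\cdots G_{s-1}(i_{s-1})\in\mathbb{R}^{1\times r_{s-1}}$ ($1\times1$ identity if $s=1$); $G^{>s}$ is the matrix with columns indexed by $(i_{s+1},\ldots,i_d)$, column $(i_{s+1},\ldots,i_d)$ being $G_{s+1}(i_{s+1})\cdots G_d(i_d)\in\mathbb{R}^{r_s\times1}$ ($1\times1$ identity if $s=d$). For $X\in\mathbb{R}^{\mathcal{I}}$, $X_{(s)}(j)$ is the matrix with rows $(i_1,\ldots,i_{s-1})$, columns $(i_{s+1},\ldots,i_d)$ and entries $X_{i_1,\ldots,i_{s-1},j,i_{s+1},\ldots,i_d}$. For a matrix $Y$ with rows indexed by $(i_1,\ldots,i_{s-1})$ and columns by $(i_{s+1},\ldots,i_d)$,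 $Y|_{P,s,j}$ sets to zero every entry $((i_1,\ldots,i_{s-1}),(i_{s+1},\ldots,i_d))$ for which $(i_1,\ldots,i_{s-1},j,i_{s+1},\ldots,i_d)\notin P$. *)

theory Defs
  imports Complex_Main "HOL-Library.FuncSet"
begin

text \<open>Mode indices run over 1..d; the index set I_mu is {0..<n mu}
(0-based). A multi-index with modes a..b is an element of the extensional
function space idx n a b. Matrices are functions nat => nat => real whose
dimensions are carried explicitly (ranks r). A TT representation is
G :: nat => nat => (nat => nat => real), where G mu j is the r(mu-1) x r(mu) core
matrix G_mu(j). Tensors are functions (nat => nat) => real on idx n 1 d.\<close>

definition idx :: "(nat \<Rightarrow> nat) \<Rightarrow> nat \<Rightarrow> nat \<Rightarrow> (nat \<Rightarrow> nat) set" where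
  "idx n a b = (\<Pi>\<^sub>E \<mu>\<in>{a..b}. {..<n \<mu>})"

definition mmul :: "nat \<Rightarrow> (nat \<Rightarrow> nat \<Rightarrow> real) \<Rightarrow> (nat \<Rightarrow> nat \<Rightarrow> real) \<Rightarrow> (nat \<Rightarrow> nat \<Rightarrow> real)" where
  "mmul k A B = (\<lambda>p q. \<Sum>c<k. A p c * B c q)"

text \<open>cprod r G i a k = G_a(i_a) G_(a+1)(i_(a+1)) ... G_(a+k-1)(i_(a+k-1)),
  an r(a-1) x r(a+k-1) matrix; the empty product is the r(a-1) x r(a-1) identity.\<close>
fun cprod :: "(nat \<Rightarrow> nat) \<Rightarrow> (nat \<Rightarrow> nat \<Rightarrow> (nat \<Rightarrow> nat \<Rightarrow> real)) \<Rightarrow> (nat \<Rightarrow> nat) \<Rightarrow> nat \<Rightarrow> nat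
      \<Rightarrow> (nat \<Rightarrow> nat \<Rightarrow> real)" where
  "cprod r G i a 0 = (\<lambda>p q. if p = q then 1 else 0)"
| "cprod r G i a (Suc k) = mmul (r (a + k - 1)) (cprod r G i a k) (G (a + k) (i (a + k)))"

definition tt_tensor :: "nat \<Rightarrow> (nat \<Rightarrow> nat) \<Rightarrow> (nat \<Rightarrow> nat \<Rightarrow> (nat \<Rightarrow> nat \<Rightarrow> real)) \<Rightarrow> (nat \<Rightarrow> nat) \<Rightarrow> real" where
  "tt_tensor d r G i = cprod r G i 1 d 0 0"

definition left_orth :: "(nat \<Rightarrow> nat) \<Rightarrow> (nat \<Rightarrow> nat) \<Rightarrow> (nat \<Rightarrow> nat \<Rightarrow> nat \<Rightarrow> real) \<Rightarrow> nat \<Rightarrow> bool" where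
  "left_orth n r C \<mu> \<longleftrightarrow> (\<forall>a<r \<mu>. \<forall>b<r \<mu>.
      (\<Sum>i<n \<mu>. \<Sum>c<r (\<mu> - 1). C i c a * C i c b) = (if a = b then 1 else 0))"

definition right_orth :: "(nat \<Rightarrow> nat) \<Rightarrow> (nat \<Rightarrow> nat) \<Rightarrow> (nat \<Rightarrow> nat \<Rightarrow> nat \<Rightarrow> real) \<Rightarrow> nat \<Rightarrow> bool" where
  "right_orth n r C \<mu> \<longleftrightarrow> (\<forall>a<r (\<mu> - 1). \<forall>b<r (\<mu> - 1).
      (\<Sum>i<n \<mu>. \<Sum>c<r \<mu>. C i a c * C i b c) = (if a = b then 1 else 0))"

text \<open>Full multi-index (i_1..i_(s-1), j, i_(s+1)..i_d) from a row index, j, and a column index.\<close>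
definition merge :: "nat \<Rightarrow> (nat \<Rightarrow> nat) \<Rightarrow> nat \<Rightarrow> (nat \<Rightarrow> nat) \<Rightarrow> (nat \<Rightarrow> nat)" where
  "merge s \<rho> j \<kappa> = (\<lambda>\<mu>. if \<mu> < s then \<rho> \<mu> else if \<mu> = s then j else \<kappa> \<mu>)"


text \<open>Row (i_1..i_(s-1)) of G^{<s} (a 1 x r(s-1) row vector) and column (i_(s+1)..i_d)
  of G^{>s} (an r(s) x 1 column vector).\<close>
definition Gless :: "(nat \<Rightarrow> nat) \<Rightarrow> (nat \<Rightarrow> nat \<Rightarrow> (nat \<Rightarrow> nat \<Rightarrow> real)) \<Rightarrow> nat \<Rightarrow> (nat \<Rightarrow> nat) \<Rightarrow> nat \<Rightarrow> real" where
  "Gless r G s \<rho> c = cprod r G \<rho> 1 (s - 1) 0 c"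

definition Ggtr :: "nat \<Rightarrow> (nat \<Rightarrow> nat) \<Rightarrow> (nat \<Rightarrow> nat \<Rightarrow> (nat \<Rightarrow> nat \<Rightarrow> real)) \<Rightarrow> nat \<Rightarrow> (nat \<Rightarrow> nat) \<Rightarrow> nat \<Rightarrow> real" where
  "Ggtr d r G s \<kappa> c = cprod r G \<kappa> (s + 1) (d - s) c 0"

text \<open>Entry (rho, kappa) of G^{<s} X G^{>s} for an r(s-1) x r(s) matrix X.\<close>
definition sandwich :: "nat \<Rightarrow> (nat \<Rightarrow> nat) \<Rightarrow> (nat \<Rightarrow> nat \<Rightarrow> (nat \<Rightarrow> nat \<Rightarrow> real)) \<Rightarrow> nat
     \<Rightarrow> (nat \<Rightarrow> nat \<Rightarrow> real) \<Rightarrow> (nat \<Rightarrow> nat) \<Rightarrow> (nat \<Rightarrow> nat) \<Rightarrow> real" where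
  "sandwich d r G s X \<rho> \<kappa> = (\<Sum>a<r (s - 1). \<Sum>b<r s. Gless r G s \<rho> a * X a b * Ggtr d r G s \<kappa> b)"

definition restr :: "(nat \<Rightarrow> nat) set \<Rightarrow> ((nat \<Rightarrow> nat) \<Rightarrow> real) \<Rightarrow> (nat \<Rightarrow> nat) \<Rightarrow> real" where
  "restr P X i = (if i \<in> P then X i else 0)"

definition Nblock :: "nat \<Rightarrow> (nat \<Rightarrow> nat) \<Rightarrow> (nat \<Rightarrow> nat) \<Rightarrow> (nat \<Rightarrow> nat \<Rightarrow> (nat \<Rightarrow> nat \<Rightarrow> real)) \<Rightarrow> nat
     \<Rightarrow> ((nat \<Rightarrow> nat) \<Rightarrow> real) \<Rightarrow> nat \<Rightarrow> nat \<Rightarrow> nat \<Rightarrow> real" where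
  "Nblock d n r G s S j a b = (\<Sum>\<rho>\<in>idx n 1 (s - 1). \<Sum>\<kappa>\<in>idx n (s + 1) d.
       Gless r G s \<rho> a * S (merge s \<rho> j \<kappa>) * Ggtr d r G s \<kappa> b)"

text \<open>Squared Frobenius norm of Y|_{P,s,j}, Y having rows idx n 1 (s-1), columns idx n (s+1) d.\<close>
definition fro2_restr :: "nat \<Rightarrow> (nat \<Rightarrow> nat) \<Rightarrow> nat \<Rightarrow> (nat \<Rightarrow> nat) set \<Rightarrow> nat
     \<Rightarrow> ((nat \<Rightarrow> nat) \<Rightarrow> (nat \<Rightarrow> nat) \<Rightarrow> real) \<Rightarrow> real" where
  "fro2_restr d n s P j Y = (\<Sum>\<rho>\<in>idx n 1 (s - 1). \<Sum>\<kappa>\<in>idx n (s + 1) d.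
       (if merge s \<rho> j \<kappa> \<in> P then (Y \<rho> \<kappa>)\<^sup>2 else 0))"

definition fro2 :: "nat \<Rightarrow> nat \<Rightarrow> (nat \<Rightarrow> nat \<Rightarrow> real) \<Rightarrow> real" where
  "fro2 p q X = (\<Sum>a<p. \<Sum>b<q. (X a b)\<^sup>2)"

end

theory Submission
  imports Defs
begin

text \<open>The objective is a quadratic polynomial in \<alpha>. Since \<open>A\<^sup>G\<close> restricted to slice j is
  \<open>G\<^sup><\<^sup>s G\<^sub>s(j) G\<^sup>>\<^sup>s\<close>, the residual is \<open>\<alpha> (G\<^sup><\<^sup>s N(j) G\<^sup>>\<^sup>s)|\<^sub>P - S\<^sub>(\<^sub>s\<^sub>)(j)\<close>; its leading
  coefficient is the denominator of the claimed formula, and by adjointness of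
  \<open>X \<mapsto> G\<^sup><\<^sup>s X G\<^sup>>\<^sup>s\<close> and \<open>Y \<mapsto> (G\<^sup><\<^sup>s)\<^sup>T Y (G\<^sup>>\<^sup>s)\<^sup>T\<close> the linear coefficient is
  \<open>-2 \<Sum>\<^sub>j \<parallel>N(j)\<parallel>\<^sub>F\<^sup>2\<close>. A quadratic with positive leading coefficient has a unique minimiser.\<close>

lemma cprod_cong:
  "(\<And>\<mu>. a \<le> \<mu> \<Longrightarrow> \<mu> < a + k \<Longrightarrow> i \<mu> = i' \<mu>) \<Longrightarrow> cprod r G i a k = cprod r G i' a k"
  by (induction k) auto

lemma cprod_add:
  assumes "0 < m \<or> q < r (a + k + m - 1)"
  shows "cprod r G i a (k + m) p q
       = (\<Sum>e<r (a + k - 1). cprod r G i a k p e * cprod r G i (a + k) m e q)"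
  using assms
proof (induction m arbitrary: q)
  case 0
  then show ?case by (simp add: if_distrib[of "\<lambda>x. _ * x"] sum.delta' cong: if_cong)
next
  case (Suc m)
  let ?G = "G (a + k + m) (i (a + k + m))"
  have "cprod r G i a (k + Suc m) p q = (\<Sum>c<r (a + k + m - 1). cprod r G i a (k + m) p c * ?G c q)"
    by (simp add: mmul_def add.assoc)
  also have "\<dots> = (\<Sum>c<r (a + k + m - 1).
      (\<Sum>e<r (a + k - 1). cprod r G i a k p e * cprod r G i (a + k) m e c) * ?G c q)"
    using Suc.IH by (intro sum.cong) auto
  also have "\<dots> = (\<Sum>e<r (a + k - 1). cprod r G i a k p e *
      (\<Sum>c<r (a + k + m - 1). cprod r G i (a + k) m e c * ?G c q))"
    by (simp add: sum_distrib_left sum_distrib_right mult.assoc) (rule sum.swap)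
  also have "\<dots> = (\<Sum>e<r (a + k - 1). cprod r G i a k p e * cprod r G i (a + k) (Suc m) e q)"
    by (simp add: mmul_def add.assoc)
  finally show ?case .
qed

lemma cprod_one:
  assumes "p < r (a - 1)"
  shows "cprod r G i a 1 p q = G a (i a) p q"
  using assms by (simp add: mmul_def if_distrib[of "\<lambda>x. x * _"] sum.delta cong: if_cong)

lemma tt_tensor_merge:
  assumes "1 \<le> s" "s \<le> d" "r d = 1"
  shows "tt_tensor d r G (merge s \<rho> j \<kappa>) = sandwich d r G s (G s j) \<rho> \<kappa>"
proof -
  let ?i = "merge s \<rho> j \<kappa>"
  have left: "cprod r G ?i 1 (s - 1) = cprod r G \<rho> 1 (s - 1)"
    by (rule cprod_cong) (auto simp: merge_def)
  have right: "cprod r G ?i (s + 1) (d - s) = cprod r G \<kappa> (s + 1) (d - s)"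
    by (rule cprod_cong) (auto simp: merge_def)
  have middle: "cprod r G ?i s (1 + (d - s)) e 0 = (\<Sum>c<r s. G s j e c * Ggtr d r G s \<kappa> c)"
    if "e < r (s - 1)" for e
  proof -
    have "cprod r G ?i s 1 e c = G s j e c" for c
      using that by (subst cprod_one) (simp_all add: merge_def)
    with assms show ?thesis
      by (subst cprod_add) (simp_all add: right[simplified] Ggtr_def)
  qed
  have "tt_tensor d r G ?i = cprod r G ?i 1 ((s - 1) + (1 + (d - s))) 0 0"
    unfolding tt_tensor_def using assms by simp
  also have "\<dots> = (\<Sum>e<r (s - 1). cprod r G ?i 1 (s - 1) 0 e * cprod r G ?i s (1 + (d - s)) e 0)"
    using assms by (subst cprod_add) auto
  also have "\<dots> = (\<Sum>e<r (s - 1). Gless r G s \<rho> e * (\<Sum>c<r s. G s j e c * Ggtr d r G s \<kappa> c))"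
    by (intro sum.cong refl) (simp_all only: left middle Gless_def lessThan_iff)
  also have "\<dots> = sandwich d r G s (G s j) \<rho> \<kappa>"
    by (simp add: sandwich_def sum_distrib_left mult.assoc)
  finally show ?thesis .
qed

lemma sandwich_add_scaled:
  "sandwich d r G s (\<lambda>a b. X a b + \<alpha> * Y a b) \<rho> \<kappa>
   = sandwich d r G s X \<rho> \<kappa> + \<alpha> * sandwich d r G s Y \<rho> \<kappa>"
  by (simp add: sandwich_def algebra_simps sum.distrib sum_distrib_left)

lemma sum_swap_pairs:
  "(\<Sum>x\<in>A. \<Sum>y\<in>B. \<Sum>u\<in>C. \<Sum>v\<in>D. f x y u v) = (\<Sum>u\<in>C. \<Sum>v\<in>D. \<Sum>x\<in>A. \<Sum>y\<in>B. f x y u v)"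
proof -
  have "(\<Sum>x\<in>A. \<Sum>y\<in>B. \<Sum>u\<in>C. \<Sum>v\<in>D. f x y u v) = (\<Sum>x\<in>A. \<Sum>u\<in>C. \<Sum>y\<in>B. \<Sum>v\<in>D. f x y u v)"
    by (intro sum.cong refl sum.swap)
  also have "\<dots> = (\<Sum>u\<in>C. \<Sum>x\<in>A. \<Sum>v\<in>D. \<Sum>y\<in>B. f x y u v)"
    by (subst sum.swap) (intro sum.cong refl sum.swap)
  also have "\<dots> = (\<Sum>u\<in>C. \<Sum>v\<in>D. \<Sum>x\<in>A. \<Sum>y\<in>B. f x y u v)"
    by (intro sum.cong refl sum.swap)
  finally show ?thesis .
qed

lemma inner_sandwich_Nblock:
  "(\<Sum>\<rho>\<in>idx n 1 (s - 1). \<Sum>\<kappa>\<in>idx n (s + 1) d.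
      S (merge s \<rho> j \<kappa>) * sandwich d r G s (Nblock d n r G s S j) \<rho> \<kappa>)
   = fro2 (r (s - 1)) (r s) (Nblock d n r G s S j)"
proof -
  let ?N = "Nblock d n r G s S j"
  have "(\<Sum>\<rho>\<in>idx n 1 (s - 1). \<Sum>\<kappa>\<in>idx n (s + 1) d. S (merge s \<rho> j \<kappa>) * sandwich d r G s ?N \<rho> \<kappa>)
     = (\<Sum>\<rho>\<in>idx n 1 (s - 1). \<Sum>\<kappa>\<in>idx n (s + 1) d. \<Sum>a<r (s - 1). \<Sum>b<r s.
          ?N a b * (Gless r G s \<rho> a * S (merge s \<rho> j \<kappa>) * Ggtr d r G s \<kappa> b))"
    by (simp add: sandwich_def sum_distrib_left mult.commute mult.left_commute)
  also have "\<dots> = (\<Sum>a<r (s - 1). \<Sum>b<r s. ?N a b * ?N a b)"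
    by (subst sum_swap_pairs) (simp add: sum_distrib_left Nblock_def)
  finally show ?thesis by (simp add: fro2_def power2_eq_square)
qed

lemma tt_objective_quadratic:
  fixes G :: "nat \<Rightarrow> nat \<Rightarrow> (nat \<Rightarrow> nat \<Rightarrow> real)"
    and M :: "(nat \<Rightarrow> nat) \<Rightarrow> real" and P :: "(nat \<Rightarrow> nat) set"
  assumes "1 \<le> s" "s \<le> d" "r d = 1"
  defines "S \<equiv> restr P (\<lambda>i. M i - tt_tensor d r G i)"
  shows "(\<Sum>j<n s. fro2_restr d n s P j (\<lambda>\<rho> \<kappa>.
            sandwich d r G s (\<lambda>a b. G s j a b + \<beta> * Nblock d n r G s S j a b) \<rho> \<kappa>
            - M (merge s \<rho> j \<kappa>)))
       = \<beta>\<^sup>2 * (\<Sum>j<n s. fro2_restr d n s P j (sandwich d r G s (Nblock d n r G s S j)))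
         - 2 * \<beta> * (\<Sum>j<n s. fro2 (r (s - 1)) (r s) (Nblock d n r G s S j))
         + (\<Sum>j<n s. \<Sum>\<rho>\<in>idx n 1 (s - 1). \<Sum>\<kappa>\<in>idx n (s + 1) d. (S (merge s \<rho> j \<kappa>))\<^sup>2)"
proof -
  let ?B = "\<lambda>j. sandwich d r G s (Nblock d n r G s S j)"
  have entry: "(if merge s \<rho> j \<kappa> \<in> P then (sandwich d r G s
          (\<lambda>a b. G s j a b + \<beta> * Nblock d n r G s S j a b) \<rho> \<kappa> - M (merge s \<rho> j \<kappa>))\<^sup>2 else 0)
      = \<beta>\<^sup>2 * (if merge s \<rho> j \<kappa> \<in> P then (?B j \<rho> \<kappa>)\<^sup>2 else 0)
        - 2 * \<beta> * (S (merge s \<rho> j \<kappa>) * ?B j \<rho> \<kappa>) + (S (merge s \<rho> j \<kappa>))\<^sup>2" for j \<rho> \<kappa>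
    using tt_tensor_merge[of s d r G \<rho> j \<kappa>, OF assms(1-3)]
    by (simp add: sandwich_add_scaled S_def restr_def power2_eq_square algebra_simps)
  have cross: "(\<Sum>\<rho>\<in>idx n 1 (s - 1). \<Sum>\<kappa>\<in>idx n (s + 1) d. c * (S (merge s \<rho> j \<kappa>) * ?B j \<rho> \<kappa>))
      = c * fro2 (r (s - 1)) (r s) (Nblock d n r G s S j)" for c j
    using inner_sandwich_Nblock[where S = S and s = s and j = j and n = n and d = d and r = r and G = G]
    by (simp flip: sum_distrib_left)
  show ?thesis
    unfolding fro2_restr_def entry
    by (simp add: sum.distrib sum_subtractf sum_distrib_left) (simp add: cross[simplified])
qed

lemma argmin_quadratic:
  fixes D F C :: real
  assumes "D > 0"
  shows "{\<alpha>. \<forall>\<beta>. \<alpha>\<^sup>2 * D - 2 * \<alpha> * F + C \<le> \<beta>\<^sup>2 * D - 2 * \<beta> * F + C} = {F / D}"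
proof -
  have completed_square:
    "\<beta>\<^sup>2 * D - 2 * \<beta> * F + C = D * (\<beta> - F / D)\<^sup>2 + (C - F\<^sup>2 / D)" for \<beta>
    using assms by (simp add: field_simps power2_eq_square)
  have "(\<forall>\<beta>. (\<alpha> - F / D)\<^sup>2 \<le> (\<beta> - F / D)\<^sup>2) \<longleftrightarrow> \<alpha> = F / D" for \<alpha>
    by (metis diff_self power_zero_numeral zero_le_power2 right_minus_eq order_antisym_conv zero_eq_power2)
  then show ?thesis
    unfolding completed_square using assms by auto
qed

theorem lemma3p14:
  fixes d s :: nat and n r :: "nat \<Rightarrow> nat"
    and G :: "nat \<Rightarrow> nat \<Rightarrow> (nat \<Rightarrow> nat \<Rightarrow> real)"
    and M :: "(nat \<Rightarrow> nat) \<Rightarrow> real" and P :: "(nat \<Rightarrow> nat) set"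
  assumes s: "1 \<le> s" "s \<le> d"
    and r0: "r 0 = 1" and rd: "r d = 1"
    and P: "P \<subseteq> idx n 1 d"
    and lo: "\<And>\<mu>. 1 \<le> \<mu> \<Longrightarrow> \<mu> < s \<Longrightarrow> left_orth n r (G \<mu>) \<mu>"
    and ro: "\<And>\<mu>. s < \<mu> \<Longrightarrow> \<mu> \<le> d \<Longrightarrow> right_orth n r (G \<mu>) \<mu>"
    and den: "(\<Sum>j<n s. fro2_restr d n s P j
                 (sandwich d r G s (Nblock d n r G s (restr P (\<lambda>i. M i - tt_tensor d r G i)) j))) \<noteq> 0"
  shows "{\<alpha>::real. \<forall>\<beta>::real.
            (\<Sum>j<n s. fro2_restr d n s P j (\<lambda>\<rho> \<kappa>.
               sandwich d r G s (\<lambda>a b. G s j a b + \<alpha> * Nblock d n r G s (restr P (\<lambda>i. M i - tt_tensor d r G i)) j a b) \<rho> \<kappa>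
               - M (merge s \<rho> j \<kappa>)))
          \<le> (\<Sum>j<n s. fro2_restr d n s P j (\<lambda>\<rho> \<kappa>.
               sandwich d r G s (\<lambda>a b. G s j a b + \<beta> * Nblock d n r G s (restr P (\<lambda>i. M i - tt_tensor d r G i)) j a b) \<rho> \<kappa>
               - M (merge s \<rho> j \<kappa>)))}
         = {(\<Sum>j<n s. fro2 (r (s - 1)) (r s) (Nblock d n r G s (restr P (\<lambda>i. M i - tt_tensor d r G i)) j))
            / (\<Sum>j<n s. fro2_restr d n s P j
                 (sandwich d r G s (Nblock d n r G s (restr P (\<lambda>i. M i - tt_tensor d r G i)) j)))}"
proof -
  have "(\<Sum>j<n s. fro2_restr d n s P j
          (sandwich d r G s (Nblock d n r G s (restr P (\<lambda>i. M i - tt_tensor d r G i)) j))) \<ge> 0"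
    unfolding fro2_restr_def by (intro sum_nonneg) auto
  with den show ?thesis
    unfolding tt_objective_quadratic[of s d r, OF s rd] by (intro argmin_quadratic) simp
qed

end
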